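(* Let $f\in\mathcal{C}(2\pi)$ and $m,n\ge0$. Then $$E^\alpha_{mn}(f;[-\pi,\pi])\le\frac{1+|\alpha|_\infty(\|Id-L\|-1)}{1-|\alpha|_\infty}\,E_{mn}(f;[-\pi,\pi])+\frac{|\alpha|_\infty}{1-|\alpha|_\infty}\|Id-L\|\,\|f\|_\infty,$$ where $\|Id-L\|$ is the operator norm.
   Context: Let $I=[x_0,x_N]=[-\pi,\pi]$, $N\ge2$, $\Delta=\{x_0<x_1<\dots<x_N\}$, $I_i=[x_{i-1},x_i]$, and $L_i(x)=a_ix+b_i$ the affine map of $I$ onto $I_i$ with $L_i(x_0)=x_{i-1}$, $L_i(x_N)=x_i$; $\alpha\in(-1,1)^N$, $|\alpha|_\infty=\max_i|\alpha_i|$. For $f,b$ continuous with $b(x_0)=f(x_0)$, $b(x_N)=f(x_N)$, $f^\alpha_{\Delta,b}$ is the unique continuous $g$ with $g(x)=f(x)+\alpha_i(g-b)(L_i^{-1}(x))$ for $x\in I_i$. $L:\mathcal{C}(2\pi)\to\mathcal{C}(2\pi)$ is bounded linear with $(Lf)(x_0)=f(x_0)$, $(Lf)(x_N)=f(x_N)$, and $\mathcal{F}^\alpha_{\Delta,L}(f)=f^\alpha_{\Delta,Lf}$. $\mathcal{C}(2\pi)=\{f\in\mathcal{C}([-\pi,\pi]):f(-\pi)=f(\pi)\}$ with sup norm; $\mathfrak{T}_m$ = real trigonometric polynomials of degree $\le m$; $\mathfrak{R}_{mn}(2\pi)=\{p/q:p\in\mathfrak{T}_m,q\in\mathfrak{T}_n,q>0\text{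 on }[-\pi,\pi]\}$; $\mathfrak{R}^\alpha_{mn}(2\pi)=\mathcal{F}^\alpha_{\Delta,L}(\mathfrak{R}_{mn}(2\pi))$. $E^\alpha_{mn}(f;[-\pi,\pi])=\inf\{\|f-r^\alpha\|_\infty:r^\alpha\in\mathfrak{R}^\alpha_{mn}(2\pi)\}$ and $E_{mn}(f;[-\pi,\pi])=\inf\{\|f-r\|_\infty:r\in\mathfrak{R}_{mn}(2\pi)\}$. *)

theory Defs
  imports "HOL-Analysis.Analysis"
begin

text \<open>The interval I = [-pi, pi]; functions are modelled as real \<Rightarrow> real,
  only their values on I matter.\<close>

definition Ipi :: "real set" where
  "Ipi = {-pi..pi}"

definition C2pi :: "(real \<Rightarrow> real) set" where
  "C2pi = {f. continuous_on Ipi f \<and> f (-pi) = f pi}"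

definition sup_norm :: "(real \<Rightarrow> real) \<Rightarrow> real" where
  "sup_norm g = Sup ((\<lambda>x. \<bar>g x\<bar>) ` Ipi)"

definition knot_partition :: "nat \<Rightarrow> (nat \<Rightarrow> real) \<Rightarrow> bool" where
  "knot_partition N xs \<longleftrightarrow> 2 \<le> N \<and> xs 0 = -pi \<and> xs N = pi \<and> (\<forall>i<N. xs i < xs (Suc i))"

text \<open>Affine maps L_i(x) = a_i x + b_i of I onto I_i with L_i(x_0)=x_{i-1}, L_i(x_N)=x_i.\<close>
definition aff_a :: "nat \<Rightarrow> (nat \<Rightarrow> real) \<Rightarrow> nat \<Rightarrow> real" where
  "aff_a N xs i = (xs i - xs (i - 1)) / (xs N - xs 0)"

definition aff_b :: "nat \<Rightarrow> (nat \<Rightarrow> real) \<Rightarrow> nat \<Rightarrow> real" where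
  "aff_b N xs i = xs (i - 1) - aff_a N xs i * xs 0"

definition aff_L :: "nat \<Rightarrow> (nat \<Rightarrow> real) \<Rightarrow> nat \<Rightarrow> real \<Rightarrow> real" where
  "aff_L N xs i x = aff_a N xs i * x + aff_b N xs i"

definition aff_L_inv :: "nat \<Rightarrow> (nat \<Rightarrow> real) \<Rightarrow> nat \<Rightarrow> real \<Rightarrow> real" where
  "aff_L_inv N xs i y = (y - aff_b N xs i) / aff_a N xs i"

definition alpha_ok :: "nat \<Rightarrow> (nat \<Rightarrow> real) \<Rightarrow> bool" where
  "alpha_ok N \<alpha> \<longleftrightarrow> (\<forall>i\<in>{1..N}. \<bar>\<alpha> i\<bar> < 1)"

definition alpha_norm :: "nat \<Rightarrow> (nat \<Rightarrow> real) \<Rightarrow> real" where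
  "alpha_norm N \<alpha> = Max ((\<lambda>i. \<bar>\<alpha> i\<bar>) ` {1..N})"

text \<open>The alpha-fractal function f^alpha_{Delta,b}: the unique continuous g on I with
  g(x) = f(x) + alpha_i (g - b)(L_i^{-1}(x)) for x in I_i (normalised to 0 outside I,
  so that it is a unique HOL function).\<close>
definition fif :: "nat \<Rightarrow> (nat \<Rightarrow> real) \<Rightarrow> (nat \<Rightarrow> real) \<Rightarrow> (real \<Rightarrow> real) \<Rightarrow> (real \<Rightarrow> real)
    \<Rightarrow> (real \<Rightarrow> real)" where
  "fif N xs \<alpha> b f = (THE g. continuous_on Ipi g \<and> (\<forall>x. x \<notin> Ipi \<longrightarrow> g x = 0) \<and>
      (\<forall>i\<in>{1..N}. \<forall>x\<in>{xs (i - 1)..xs i}.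
          g x = f x + \<alpha> i * (g (aff_L_inv N xs i x) - b (aff_L_inv N xs i x))))"

definition fractal_op :: "nat \<Rightarrow> (nat \<Rightarrow> real) \<Rightarrow> (nat \<Rightarrow> real)
    \<Rightarrow> ((real \<Rightarrow> real) \<Rightarrow> (real \<Rightarrow> real)) \<Rightarrow> (real \<Rightarrow> real) \<Rightarrow> (real \<Rightarrow> real)" where
  "fractal_op N xs \<alpha> L f = fif N xs \<alpha> (L f) f"

text \<open>L is a bounded linear operator C(2pi) -> C(2pi) (well defined on C(2pi), i.e.
  depending only on values on I) with (Lf)(x_0) = f(x_0), (Lf)(x_N) = f(x_N).\<close>
definition admissible_op :: "nat \<Rightarrow> (nat \<Rightarrow> real) \<Rightarrow> ((real \<Rightarrow> real) \<Rightarrow> (real \<Rightarrow> real)) \<Rightarrow> bool" where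
  "admissible_op N xs L \<longleftrightarrow>
     (\<forall>f\<in>C2pi. L f \<in> C2pi) \<and>
     (\<forall>f\<in>C2pi. \<forall>g\<in>C2pi. (\<forall>x\<in>Ipi. f x = g x) \<longrightarrow> (\<forall>x\<in>Ipi. L f x = L g x)) \<and>
     (\<forall>f\<in>C2pi. \<forall>g\<in>C2pi. \<forall>x\<in>Ipi. L (\<lambda>t. f t + g t) x = L f x + L g x) \<and>
     (\<forall>f\<in>C2pi. \<forall>c. \<forall>x\<in>Ipi. L (\<lambda>t. c * f t) x = c * L f x) \<and>
     (\<exists>K. \<forall>f\<in>C2pi. sup_norm (L f) \<le> K * sup_norm f) \<and>
     (\<forall>f\<in>C2pi. L f (xs 0) = f (xs 0) \<and> L f (xs N) = f (xs N))"

definition op_norm_Id_minus :: "((real \<Rightarrow> real) \<Rightarrow> (real \<Rightarrow> real)) \<Rightarrow> real" where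
  "op_norm_Id_minus L = Sup {sup_norm (\<lambda>x. f x - L f x) | f. f \<in> C2pi \<and> sup_norm f \<le> 1}"

definition trig_poly :: "nat \<Rightarrow> (real \<Rightarrow> real) \<Rightarrow> bool" where
  "trig_poly m p \<longleftrightarrow> (\<exists>a b :: nat \<Rightarrow> real. \<forall>x.
      p x = a 0 + (\<Sum>k=1..m. a k * cos (real k * x) + b k * sin (real k * x)))"

definition rat_trig :: "nat \<Rightarrow> nat \<Rightarrow> (real \<Rightarrow> real) set" where
  "rat_trig m n = {(\<lambda>x. p x / q x) | p q. trig_poly m p \<and> trig_poly n q \<and> (\<forall>x\<in>Ipi. q x > 0)}"

definition frac_rat_trig :: "nat \<Rightarrow> (nat \<Rightarrow> real) \<Rightarrow> (nat \<Rightarrow> real)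
    \<Rightarrow> ((real \<Rightarrow> real) \<Rightarrow> (real \<Rightarrow> real)) \<Rightarrow> nat \<Rightarrow> nat \<Rightarrow> (real \<Rightarrow> real) set" where
  "frac_rat_trig N xs \<alpha> L m n = fractal_op N xs \<alpha> L ` rat_trig m n"

definition E_best :: "nat \<Rightarrow> nat \<Rightarrow> (real \<Rightarrow> real) \<Rightarrow> real" where
  "E_best m n f = Inf {sup_norm (\<lambda>x. f x - r x) | r. r \<in> rat_trig m n}"

definition E_best_alpha :: "nat \<Rightarrow> (nat \<Rightarrow> real) \<Rightarrow> (nat \<Rightarrow> real)
    \<Rightarrow> ((real \<Rightarrow> real) \<Rightarrow> (real \<Rightarrow> real)) \<Rightarrow> nat \<Rightarrow> nat \<Rightarrow> (real \<Rightarrow> real) \<Rightarrow> real" where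
  "E_best_alpha N xs \<alpha> L m n f =
     Inf {sup_norm (\<lambda>x. f x - r x) | r. r \<in> frac_rat_trig N xs \<alpha> L m n}"

end

theory Submission
  imports Defs
begin

text \<open>
  If \<open>g\<close> solves the self-affine equation with data \<open>h\<close>, \<open>b\<close>, then \<open>D = g - h\<close> is the fixed
  point of the Read-Bajraktarevic operator \<open>D \<mapsto> \<Sum>\<^sub>i \<alpha>\<^sub>i (D + h - b) \<circ> L\<^sub>i\<^sup>-\<^sup>1\<close>, a contraction
  of ratio \<open>|\<alpha>|\<^sub>\<infinity>\<close> in the sup norm. Hence \<open>\<parallel>F r - r\<parallel> \<le> |\<alpha>|\<^sub>\<infinity>/(1 - |\<alpha>|\<^sub>\<infinity>) \<parallel>r - L r\<parallel>\<close>, and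
  \<open>\<parallel>r - L r\<parallel> \<le> \<parallel>Id - L\<parallel> (\<parallel>f\<parallel> + \<parallel>f - r\<parallel>)\<close>. Adding \<open>\<parallel>f - r\<parallel>\<close> bounds \<open>\<parallel>f - F r\<parallel>\<close> by an
  affine function of \<open>\<parallel>f - r\<parallel>\<close> with slope \<open>1 + |\<alpha>|\<^sub>\<infinity>\<parallel>Id - L\<parallel>/(1 - |\<alpha>|\<^sub>\<infinity>)\<close>, and taking the
  infimum over \<open>r \<in> \<R>\<^sub>m\<^sub>n\<close> gives the estimate.
\<close>

lemma Ipi_endpoints: "-pi \<in> Ipi" "pi \<in> Ipi"
  unfolding Ipi_def by auto

lemma compact_Ipi: "compact Ipi"
  unfolding Ipi_def by simp

lemma bdd_above_abs_Ipi:
  fixes g :: "real \<Rightarrow> real"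
  assumes "continuous_on Ipi g"
  shows "bdd_above ((\<lambda>x. \<bar>g x\<bar>) ` Ipi)"
proof -
  have "compact ((\<lambda>x. \<bar>g x\<bar>) ` Ipi)"
    by (intro compact_continuous_image compact_Ipi continuous_on_rabs[OF assms])
  then show ?thesis by (intro bounded_imp_bdd_above compact_imp_bounded)
qed

lemma abs_le_sup_norm: "continuous_on Ipi g \<Longrightarrow> x \<in> Ipi \<Longrightarrow> \<bar>g x\<bar> \<le> sup_norm g"
  unfolding sup_norm_def by (rule cSUP_upper) (auto intro: bdd_above_abs_Ipi)

lemma sup_norm_le: "(\<And>x. x \<in> Ipi \<Longrightarrow> \<bar>g x\<bar> \<le> B) \<Longrightarrow> sup_norm g \<le> B"
  unfolding sup_norm_def using Ipi_endpoints by (intro cSUP_least) auto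

lemma sup_norm_nonneg: "continuous_on Ipi g \<Longrightarrow> 0 \<le> sup_norm g"
  using abs_le_sup_norm[of g "-pi"] Ipi_endpoints by linarith

lemma le_Inf_affine:
  fixes S :: "real set"
  assumes "S \<noteq> {}" and "0 < c" and "\<And>s. s \<in> S \<Longrightarrow> E \<le> c * s + d"
  shows "E \<le> c * Inf S + d"
proof -
  have "(E - d) / c \<le> Inf S"
    using assms by (intro cInf_greatest) (auto simp: pos_divide_le_eq algebra_simps)
  then show ?thesis using assms(2) by (simp add: pos_divide_le_eq algebra_simps)
qed

context
  fixes N :: nat and xs :: "nat \<Rightarrow> real" and \<alpha> :: "nat \<Rightarrow> real"
  assumes knots: "knot_partition N xs" and alpha: "alpha_ok N \<alpha>"
begin

lemma knot_first: "xs 0 = -pi" and knot_last: "xs N = pi" and two_le_N: "2 \<le> N"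
  using knots unfolding knot_partition_def by auto

lemma knot_mono: "i \<le> j \<Longrightarrow> j \<le> N \<Longrightarrow> xs i \<le> xs j"
proof (induction j)
  case (Suc j)
  show ?case
  proof (cases "i = Suc j")
    case False
    then have "xs i \<le> xs j" using Suc by auto
    moreover have "xs j < xs (Suc j)" using knots Suc.prems unfolding knot_partition_def by auto
    ultimately show ?thesis by simp
  qed simp
qed simp

lemma knot_strict_mono: "i < j \<Longrightarrow> j \<le> N \<Longrightarrow> xs i < xs j"
  using knots knot_mono[of "Suc i" j] unfolding knot_partition_def
  by (metis Suc_leI less_le_trans order.strict_trans1)

lemma piece_subset_Ipi: "i \<in> {1..N} \<Longrightarrow> {xs (i-1)..xs i} \<subseteq> Ipi"
  using knot_mono[of 0 "i-1"] knot_mono[of i N] knot_first knot_last unfolding Ipi_def by auto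

lemma Ipi_pieces_cover:
  assumes x: "x \<in> Ipi"
  obtains j where "j \<in> {1..N}" "x \<in> {xs (j-1)..xs j}"
proof -
  define j where "j = (LEAST j. x \<le> xs j)"
  have ex: "x \<le> xs N" using x knot_last unfolding Ipi_def by auto
  have jx: "x \<le> xs j" unfolding j_def by (rule LeastI[of _ N], rule ex)
  have jN: "j \<le> N" unfolding j_def by (rule Least_le, rule ex)
  show ?thesis
  proof (cases "j = 0")
    case True
    then have "x = xs 0" using jx x knot_first unfolding Ipi_def by auto
    moreover have "xs 0 \<le> xs 1" using knot_mono two_le_N by auto
    ultimately show ?thesis using that[of 1] two_le_N by auto
  next
    case False
    have "\<not> x \<le> xs (j-1)" unfolding j_def
      by (rule not_less_Least) (use False j_def in auto)
    then show ?thesis using that[of j] False jx jN by auto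
  qed
qed

lemma pieces_disjoint:
  assumes "i \<in> {1..N}" "j \<in> {1..N}" "i \<noteq> j" "x \<in> {xs (j-1)..xs j}"
  shows "x \<notin> {xs (i-1)<..<xs i}"
proof (cases "i < j")
  case True
  then have "xs i \<le> xs (j-1)" using assms by (intro knot_mono) auto
  then show ?thesis using assms by auto
next
  case False
  then have "xs j \<le> xs (i-1)" using assms by (intro knot_mono) auto
  then show ?thesis using assms by auto
qed

lemma aff_a_pos: "i \<in> {1..N} \<Longrightarrow> aff_a N xs i > 0"
  unfolding aff_a_def using knot_strict_mono[of "i-1" i] knot_first knot_last by auto

lemma aff_L_inv_left: "i \<in> {1..N} \<Longrightarrow> aff_L_inv N xs i (xs (i-1)) = -pi"
  using aff_a_pos[of i] unfolding aff_L_inv_def aff_b_def by (simp add: knot_first)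

lemma aff_L_inv_right:
  assumes i: "i \<in> {1..N}"
  shows "aff_L_inv N xs i (xs i) = pi"
proof -
  have "xs i - xs (i-1) = aff_a N xs i * (2*pi)"
    unfolding aff_a_def using knot_first knot_last by simp
  then show ?thesis using aff_a_pos[OF i] unfolding aff_L_inv_def aff_b_def knot_first
    by (simp add: field_simps)
qed

lemma aff_L_inv_mono: "i \<in> {1..N} \<Longrightarrow> x \<le> y \<Longrightarrow> aff_L_inv N xs i x \<le> aff_L_inv N xs i y"
  using aff_a_pos[of i] unfolding aff_L_inv_def by (simp add: divide_right_mono)

lemma aff_L_inv_in_Ipi: "i \<in> {1..N} \<Longrightarrow> x \<in> {xs (i-1)..xs i} \<Longrightarrow> aff_L_inv N xs i x \<in> Ipi"
  using aff_L_inv_mono[of i "xs (i-1)" x] aff_L_inv_mono[of i x "xs i"]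
    aff_L_inv_left aff_L_inv_right
  unfolding Ipi_def by auto

text \<open>Retracting onto \<open>I\<^sub>i\<close> before applying \<open>L\<^sub>i\<^sup>-\<^sup>1\<close> makes the Read-Bajraktarevic sum below
  continuous on all of \<open>\<real>\<close>, so that no case distinction on the pieces is needed.\<close>

definition clamp_inv :: "nat \<Rightarrow> real \<Rightarrow> real" where
  "clamp_inv i x = aff_L_inv N xs i (max (xs (i-1)) (min (xs i) x))"

lemma clamp_inv_in_Ipi: "i \<in> {1..N} \<Longrightarrow> clamp_inv i x \<in> Ipi"
  unfolding clamp_inv_def using knot_strict_mono[of "i-1" i] by (intro aff_L_inv_in_Ipi) auto

lemma clamp_inv_on_piece: "x \<in> {xs (i-1)..xs i} \<Longrightarrow> clamp_inv i x = aff_L_inv N xs i x"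
  unfolding clamp_inv_def by (simp add: max_absorb2 min_absorb2)

lemma clamp_inv_off_piece:
  assumes "i \<in> {1..N}" "x \<notin> {xs (i-1)<..<xs i}"
  shows "clamp_inv i x \<in> {-pi, pi}"
  using assms knot_strict_mono[of "i-1" i] aff_L_inv_left aff_L_inv_right
  unfolding clamp_inv_def by (auto simp: max_def min_def)

lemma continuous_clamp_inv: "continuous_on UNIV (clamp_inv i)"
  unfolding clamp_inv_def aff_L_inv_def divide_inverse by (intro continuous_intros)

lemma abs_alpha_le_alpha_norm: "i \<in> {1..N} \<Longrightarrow> \<bar>\<alpha> i\<bar> \<le> alpha_norm N \<alpha>"
  unfolding alpha_norm_def by (rule Max_ge) auto

lemma alpha_norm_less_one: "alpha_norm N \<alpha> < 1"
proof -
  have "alpha_norm N \<alpha> \<in> (\<lambda>i. \<bar>\<alpha> i\<bar>) ` {1..N}"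
    unfolding alpha_norm_def using two_le_N by (intro Max_in) auto
  then show ?thesis using alpha unfolding alpha_ok_def by auto
qed

lemma alpha_norm_nonneg: "0 \<le> alpha_norm N \<alpha>"
  using abs_alpha_le_alpha_norm[of 1] two_le_N by auto

text \<open>Read-Bajraktarevic operator acting on the perturbation \<open>d = g - h\<close>, where \<open>u = h - b\<close>.\<close>

definition rb_op :: "(real \<Rightarrow> real) \<Rightarrow> (real \<Rightarrow> real) \<Rightarrow> real \<Rightarrow> real" where
  "rb_op u d x = (\<Sum>i\<in>{1..N}. \<alpha> i * (d (clamp_inv i x) + u (clamp_inv i x)))"

lemma rb_op_summand_vanishes:
  assumes "d (-pi) + u (-pi) = 0" "d pi + u pi = 0" "i \<in> {1..N}" "x \<notin> {xs (i-1)<..<xs i}"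
  shows "\<alpha> i * (d (clamp_inv i x) + u (clamp_inv i x)) = 0"
  using clamp_inv_off_piece[of i x] assms by auto

lemma rb_op_on_piece:
  assumes ends: "d (-pi) + u (-pi) = 0" "d pi + u pi = 0"
    and j: "j \<in> {1..N}" and x: "x \<in> {xs (j-1)..xs j}"
  shows "rb_op u d x = \<alpha> j * (d (aff_L_inv N xs j x) + u (aff_L_inv N xs j x))"
proof -
  have "(\<Sum>i\<in>{1..N} - {j}. \<alpha> i * (d (clamp_inv i x) + u (clamp_inv i x))) = 0"
    using pieces_disjoint[OF _ j _ x] by (intro sum.neutral ballI rb_op_summand_vanishes[OF ends]) auto
  then show ?thesis
    unfolding rb_op_def using j by (simp add: sum.remove clamp_inv_on_piece[OF x])
qed

lemma rb_op_outside_Ipi: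
  assumes ends: "d (-pi) + u (-pi) = 0" "d pi + u pi = 0" and x: "x \<notin> Ipi"
  shows "rb_op u d x = 0"
  unfolding rb_op_def
proof (intro sum.neutral ballI rb_op_summand_vanishes[OF ends])
  fix i assume "i \<in> {1..N}"
  then show "x \<notin> {xs (i-1)<..<xs i}" using x piece_subset_Ipi[of i] by (force simp: subset_iff)
qed

lemma rb_op_endpoints:
  assumes "u (-pi) = 0" "u pi = 0" "d (-pi) = 0" "d pi = 0"
  shows "rb_op u d (-pi) = 0" "rb_op u d pi = 0"
proof -
  have "-pi \<in> {xs (1-1)..xs 1}" "pi \<in> {xs (N-1)..xs N}"
    using knot_mono[of 0 1] knot_mono[of "N-1" N] two_le_N knot_first knot_last by auto
  then show "rb_op u d (-pi) = 0" "rb_op u d pi = 0"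
    using rb_op_on_piece[of d u 1 "-pi"] rb_op_on_piece[of d u N pi] assms two_le_N
      aff_L_inv_left[of 1] aff_L_inv_right[of N] knot_first knot_last by auto
qed

lemma continuous_rb_op:
  assumes "continuous_on Ipi u" "continuous_on UNIV d"
  shows "continuous_on UNIV (rb_op u d)"
proof -
  have "continuous_on UNIV (\<lambda>x. d (clamp_inv i x))" "continuous_on UNIV (\<lambda>x. u (clamp_inv i x))"
    if "i \<in> {1..N}" for i
    using assms clamp_inv_in_Ipi[OF that]
    by (auto intro!: continuous_on_compose2[OF _ continuous_clamp_inv])
  then show ?thesis
    unfolding rb_op_def[abs_def] by (intro continuous_intros) auto
qed

lemma rb_op_abs_le:
  assumes "u (-pi) = 0" "u pi = 0" "d (-pi) = 0" "d pi = 0"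
    and B: "\<And>y. y \<in> Ipi \<Longrightarrow> \<bar>d y + u y\<bar> \<le> B"
  shows "\<bar>rb_op u d x\<bar> \<le> alpha_norm N \<alpha> * B"
proof -
  have B0: "0 \<le> B" using B[of "-pi"] Ipi_endpoints by auto
  show ?thesis
  proof (cases "x \<in> Ipi")
    case True
    then obtain j where j: "j \<in> {1..N}" "x \<in> {xs (j-1)..xs j}" by (rule Ipi_pieces_cover)
    define y where "y = aff_L_inv N xs j x"
    have "\<bar>rb_op u d x\<bar> = \<bar>\<alpha> j\<bar> * \<bar>d y + u y\<bar>"
      using rb_op_on_piece[OF _ _ j] assms unfolding y_def by (simp add: abs_mult)
    also have "\<dots> \<le> alpha_norm N \<alpha> * B"
      using abs_alpha_le_alpha_norm[OF j(1)] B aff_L_inv_in_Ipi[OF j] B0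
      unfolding y_def by (intro mult_mono) auto
    finally show ?thesis .
  next
    case False
    then show ?thesis using rb_op_outside_Ipi[of d u x] assms B0 alpha_norm_nonneg by simp
  qed
qed

lemma rb_op_diff: "rb_op u d x - rb_op u e x = rb_op (\<lambda>_. 0) (\<lambda>y. d y - e y) x"
  unfolding rb_op_def by (simp add: sum_subtractf[symmetric] algebra_simps)

lemma rb_iterates:
  assumes cu: "continuous_on Ipi u" and u: "u (-pi) = 0" "u pi = 0"
  defines "d k \<equiv> (rb_op u ^^ k) (\<lambda>_. 0)"
  shows "continuous_on UNIV (d k) \<and> d k (-pi) = 0 \<and> d k pi = 0
    \<and> (\<forall>x. \<bar>d k x\<bar> \<le> alpha_norm N \<alpha> / (1 - alpha_norm N \<alpha>) * sup_norm u)"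
proof (induction k)
  case 0
  show ?case
    using sup_norm_nonneg[OF cu] alpha_norm_nonneg alpha_norm_less_one by (simp add: d_def)
next
  case (Suc k)
  define B where "B = alpha_norm N \<alpha> / (1 - alpha_norm N \<alpha>) * sup_norm u"
  have dSuc: "d (Suc k) = rb_op u (d k)" by (simp add: d_def)
  have "\<bar>d k y + u y\<bar> \<le> B + sup_norm u" if "y \<in> Ipi" for y
  proof -
    have "\<bar>d k y\<bar> \<le> B" using Suc.IH unfolding B_def by blast
    then show ?thesis using abs_le_sup_norm[OF cu that] by linarith
  qed
  then have "\<bar>rb_op u (d k) x\<bar> \<le> alpha_norm N \<alpha> * (B + sup_norm u)" for x
    using Suc.IH u by (intro rb_op_abs_le) auto
  moreover have "alpha_norm N \<alpha> * (B + sup_norm u) = B"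
    unfolding B_def using alpha_norm_less_one by (simp add: field_simps)
  ultimately show ?case
    using Suc.IH u continuous_rb_op[OF cu] rb_op_endpoints unfolding dSuc B_def by auto
qed

lemma rb_iterates_step:
  assumes cu: "continuous_on Ipi u" and u: "u (-pi) = 0" "u pi = 0"
  defines "d k \<equiv> (rb_op u ^^ k) (\<lambda>_. 0)"
  shows "\<bar>d (Suc k) x - d k x\<bar> \<le> alpha_norm N \<alpha> ^ Suc k * sup_norm u"
proof (induction k arbitrary: x)
  case 0
  have "\<bar>rb_op u (\<lambda>_. 0) x\<bar> \<le> alpha_norm N \<alpha> * sup_norm u"
    using u abs_le_sup_norm[OF cu] by (intro rb_op_abs_le) auto
  then show ?case by (simp add: d_def)
next
  case (Suc k)
  have d: "d k (-pi) = 0" "d k pi = 0" "d (Suc k) (-pi) = 0" "d (Suc k) pi = 0"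
    using rb_iterates[OF assms(1-3)] unfolding d_def by blast+
  have "\<bar>d (Suc (Suc k)) x - d (Suc k) x\<bar> = \<bar>rb_op (\<lambda>_. 0) (\<lambda>y. d (Suc k) y - d k y) x\<bar>"
    using rb_op_diff[of u "d (Suc k)" x "d k"] by (simp add: d_def)
  also have "\<dots> \<le> alpha_norm N \<alpha> * (alpha_norm N \<alpha> ^ Suc k * sup_norm u)"
    using Suc.IH d by (intro rb_op_abs_le) auto
  finally show ?case by simp
qed

lemma rb_op_fixed_point:
  assumes cu: "continuous_on Ipi u" and u: "u (-pi) = 0" "u pi = 0"
  obtains D where "continuous_on UNIV D" "D (-pi) = 0" "D pi = 0" "\<And>x. rb_op u D x = D x"
    "\<And>x. \<bar>D x\<bar> \<le> alpha_norm N \<alpha> / (1 - alpha_norm N \<alpha>) * sup_norm u"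
proof -
  define d where "d k = (rb_op u ^^ k) (\<lambda>_. 0)" for k
  have d: "continuous_on UNIV (d k)" "d k (-pi) = 0" "d k pi = 0"
    "\<bar>d k x\<bar> \<le> alpha_norm N \<alpha> / (1 - alpha_norm N \<alpha>) * sup_norm u" for k x
    using rb_iterates[OF assms] unfolding d_def by blast+
  have telescope: "(\<lambda>n x. \<Sum>i<n. d (Suc i) x - d i x) = d"
  proof (intro ext)
    fix n x
    show "(\<Sum>i<n. d (Suc i) x - d i x) = d n x"
      using sum_lessThan_telescope[of "\<lambda>i. d i x" n] by (simp add: d_def)
  qed
  have "summable (\<lambda>k. alpha_norm N \<alpha> ^ k)"
    using alpha_norm_nonneg alpha_norm_less_one by (intro summable_geometric) simp
  then have "summable (\<lambda>k. alpha_norm N \<alpha> ^ Suc k * sup_norm u)"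
    by (intro summable_mult2) (simp only: summable_Suc_iff)
  then have "uniform_limit UNIV (\<lambda>n x. \<Sum>i<n. d (Suc i) x - d i x)
      (\<lambda>x. \<Sum>i. d (Suc i) x - d i x) sequentially"
  proof (rule Weierstrass_m_test[rotated])
    show "norm (d (Suc i) x - d i x) \<le> alpha_norm N \<alpha> ^ Suc i * sup_norm u" for i x
      using rb_iterates_step[OF assms] unfolding d_def real_norm_def by blast
  qed
  then obtain D where lim: "uniform_limit UNIV d D sequentially"
    unfolding telescope by blast
  then have pointwise: "(\<lambda>k. d k x) \<longlonglongrightarrow> D x" for x
    by (rule tendsto_uniform_limitI) simp
  show ?thesis
  proof
    show "continuous_on UNIV D"
      by (rule uniform_limit_theorem[OF _ lim]) (use d in auto)
    show "D (-pi) = 0" "D pi = 0"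
      using pointwise[of "-pi"] pointwise[of pi] by (simp_all add: d LIMSEQ_const_iff)
    show "\<bar>D x\<bar> \<le> alpha_norm N \<alpha> / (1 - alpha_norm N \<alpha>) * sup_norm u" for x
      by (rule LIMSEQ_le_const2[OF tendsto_rabs[OF pointwise[of x]]]) (use d(4) in blast)
    show "rb_op u D x = D x" for x
    proof (rule LIMSEQ_unique)
      show "(\<lambda>k. d (Suc k) x) \<longlonglongrightarrow> D x" using pointwise by (rule LIMSEQ_Suc)
      have "d (Suc k) x = rb_op u (d k) x" for k by (simp add: d_def)
      then show "(\<lambda>k. d (Suc k) x) \<longlonglongrightarrow> rb_op u D x"
        unfolding rb_op_def by (simp only:) (intro tendsto_intros pointwise)
    qed
  qed
qed

definition fif_equation :: "(real \<Rightarrow> real) \<Rightarrow> (real \<Rightarrow> real) \<Rightarrow> (real \<Rightarrow> real) \<Rightarrow> bool" where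
  "fif_equation b h g \<longleftrightarrow> continuous_on Ipi g \<and> (\<forall>x. x \<notin> Ipi \<longrightarrow> g x = 0) \<and>
     (\<forall>i\<in>{1..N}. \<forall>x\<in>{xs (i - 1)..xs i}.
        g x = h x + \<alpha> i * (g (aff_L_inv N xs i x) - b (aff_L_inv N xs i x)))"

lemma fif_eq_The: "fif N xs \<alpha> b h = (THE g. fif_equation b h g)"
  unfolding fif_def fif_equation_def ..

lemma fif_equation_unique:
  assumes g: "fif_equation b h g" and g': "fif_equation b h g'"
  shows "g' = g"
proof -
  define e where "e x = g' x - g x" for x
  have ce: "continuous_on Ipi e"
    using g g' unfolding e_def[abs_def] fif_equation_def by (intro continuous_intros) auto
  have "\<bar>e y\<bar> \<le> alpha_norm N \<alpha> * sup_norm e" if y: "y \<in> Ipi" for y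
  proof -
    obtain j where j: "j \<in> {1..N}" "y \<in> {xs (j-1)..xs j}" using y by (rule Ipi_pieces_cover)
    define z where "z = aff_L_inv N xs j y"
    have "g' y = h y + \<alpha> j * (g' z - b z)" "g y = h y + \<alpha> j * (g z - b z)"
      using g g' j unfolding fif_equation_def z_def by blast+
    then have "e y = \<alpha> j * e z" unfolding e_def by (simp add: algebra_simps)
    then have "\<bar>e y\<bar> = \<bar>\<alpha> j\<bar> * \<bar>e z\<bar>" by (simp add: abs_mult)
    also have "\<dots> \<le> alpha_norm N \<alpha> * sup_norm e"
      using abs_alpha_le_alpha_norm[OF j(1)] abs_le_sup_norm[OF ce aff_L_inv_in_Ipi[OF j]]
      unfolding z_def by (intro mult_mono) auto
    finally show ?thesis .
  qed
  then have "sup_norm e \<le> alpha_norm N \<alpha> * sup_norm e" by (rule sup_norm_le)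
  then have "(1 - alpha_norm N \<alpha>) * sup_norm e \<le> 0" by (simp add: algebra_simps)
  then have e0: "sup_norm e \<le> 0" using alpha_norm_less_one by (simp add: mult_le_0_iff)
  show ?thesis
  proof
    fix x show "g' x = g x"
      using abs_le_sup_norm[OF ce, of x] e0 g g' unfolding e_def fif_equation_def
      by (cases "x \<in> Ipi") auto
  qed
qed

lemma
  assumes ch: "continuous_on Ipi h" and cb: "continuous_on Ipi b"
    and ends: "h (-pi) = b (-pi)" "h pi = b pi"
  shows continuous_fif: "continuous_on Ipi (fif N xs \<alpha> b h)"
    and fif_minus_abs_le:
      "x \<in> Ipi \<Longrightarrow> \<bar>fif N xs \<alpha> b h x - h x\<bar> \<le> alpha_norm N \<alpha> / (1 - alpha_norm N \<alpha>) * sup_norm (\<lambda>x. h x - b x)"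
proof -
  define u where "u x = h x - b x" for x
  have cu: "continuous_on Ipi u"
    unfolding u_def[abs_def] using ch cb by (intro continuous_intros)
  have u: "u (-pi) = 0" "u pi = 0" using ends unfolding u_def by auto
  obtain D where cD: "continuous_on UNIV D" and D: "D (-pi) = 0" "D pi = 0"
    and fixed: "\<And>x. rb_op u D x = D x"
    and bound: "\<And>x. \<bar>D x\<bar> \<le> alpha_norm N \<alpha> / (1 - alpha_norm N \<alpha>) * sup_norm u"
    using rb_op_fixed_point[OF cu u] by blast
  define g where "g x = (if x \<in> Ipi then h x + D x else 0)" for x
  have "fif_equation b h g"
    unfolding fif_equation_def
  proof (intro conjI ballI allI impI)
    have "continuous_on Ipi (\<lambda>x. h x + D x)"
      using ch continuous_on_subset[OF cD] by (intro continuous_intros) auto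
    then show "continuous_on Ipi g" by (rule continuous_on_eq) (simp add: g_def)
    fix i x assume i: "i \<in> {1..N}" and x: "x \<in> {xs (i - 1)..xs i}"
    define y where "y = aff_L_inv N xs i x"
    have "D x = \<alpha> i * (D y + u y)"
      using fixed[of x] rb_op_on_piece[OF _ _ i x] D u unfolding y_def by simp
    moreover have "x \<in> Ipi" "y \<in> Ipi"
      using piece_subset_Ipi[OF i] x aff_L_inv_in_Ipi[OF i x] unfolding y_def by auto
    ultimately show "g x = h x + \<alpha> i * (g (aff_L_inv N xs i x) - b (aff_L_inv N xs i x))"
      unfolding g_def y_def[symmetric] u_def by (simp add: algebra_simps)
  qed (simp add: g_def)
  then have fif: "fif N xs \<alpha> b h = g"
    unfolding fif_eq_The by (metis fif_equation_unique the_equality)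
  show "continuous_on Ipi (fif N xs \<alpha> b h)"
    using \<open>fif_equation b h g\<close> unfolding fif fif_equation_def by blast
  show "\<bar>fif N xs \<alpha> b h x - h x\<bar> \<le> alpha_norm N \<alpha> / (1 - alpha_norm N \<alpha>) * sup_norm (\<lambda>x. h x - b x)"
    if "x \<in> Ipi"
    using bound[of x] that unfolding fif g_def u_def[abs_def] by simp
qed

end

lemma trig_poly_continuous_periodic:
  assumes "trig_poly m p"
  shows "continuous_on UNIV p" "p (-pi) = p pi"
proof -
  obtain a b :: "nat \<Rightarrow> real" where
    "\<And>x. p x = a 0 + (\<Sum>k=1..m. a k * cos (real k * x) + b k * sin (real k * x))"
    using assms unfolding trig_poly_def by blast
  then have p: "p = (\<lambda>x. a 0 + (\<Sum>k=1..m. a k * cos (real k * x) + b k * sin (real k * x)))"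
    by (intro ext) simp
  show "continuous_on UNIV p" unfolding p by (intro continuous_intros)
  show "p (-pi) = p pi" unfolding p by simp
qed

lemma rat_trig_subset_C2pi: "rat_trig m n \<subseteq> C2pi"
proof
  fix r assume "r \<in> rat_trig m n"
  then obtain p q where r: "r = (\<lambda>x. p x / q x)" and pq: "trig_poly m p" "trig_poly n q"
    and q: "\<forall>x\<in>Ipi. q x > 0" unfolding rat_trig_def by blast
  have "continuous_on Ipi r" unfolding r
    using trig_poly_continuous_periodic[OF pq(1)] trig_poly_continuous_periodic[OF pq(2)] q
    by (intro continuous_on_divide) (auto intro: continuous_on_subset)
  moreover have "r (-pi) = r pi"
    unfolding r using trig_poly_continuous_periodic[OF pq(1)] trig_poly_continuous_periodic[OF pq(2)]
    by simp
  ultimately show "r \<in> C2pi" unfolding C2pi_def by simp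
qed

lemma rat_trig_nonempty: "rat_trig m n \<noteq> {}"
proof -
  have "trig_poly m (\<lambda>x. 0)" unfolding trig_poly_def
    by (rule exI[of _ "\<lambda>k. 0"], rule exI[of _ "\<lambda>k. 0"]) simp
  moreover have "trig_poly n (\<lambda>x. 1)" unfolding trig_poly_def
    by (rule exI[of _ "\<lambda>k. if k = 0 then 1 else 0"], rule exI[of _ "\<lambda>k. 0"]) simp
  ultimately have "(\<lambda>x. 0 / 1) \<in> rat_trig m n" unfolding rat_trig_def by force
  then show ?thesis by blast
qed

lemma C2pi_continuous_on: "f \<in> C2pi \<Longrightarrow> continuous_on Ipi f"
  unfolding C2pi_def by blast

lemma
  assumes "admissible_op N xs L"
  shows admissible_op_C2pi: "f \<in> C2pi \<Longrightarrow> L f \<in> C2pi"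
    and admissible_op_cong:
      "f \<in> C2pi \<Longrightarrow> g \<in> C2pi \<Longrightarrow> (\<And>x. x \<in> Ipi \<Longrightarrow> f x = g x) \<Longrightarrow> x \<in> Ipi \<Longrightarrow> L f x = L g x"
    and admissible_op_scale: "f \<in> C2pi \<Longrightarrow> x \<in> Ipi \<Longrightarrow> L (\<lambda>t. c * f t) x = c * L f x"
    and admissible_op_bounded: "\<exists>K. \<forall>f\<in>C2pi. sup_norm (L f) \<le> K * sup_norm f"
    and admissible_op_endpoints: "f \<in> C2pi \<Longrightarrow> L f (xs 0) = f (xs 0) \<and> L f (xs N) = f (xs N)"
  using assms unfolding admissible_op_def by blast+

lemma admissible_op_vanishing:
  assumes L: "admissible_op N xs L" and f: "f \<in> C2pi" and f0: "\<And>x. x \<in> Ipi \<Longrightarrow> f x = 0"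
    and x: "x \<in> Ipi"
  shows "L f x = 0"
proof -
  have "(\<lambda>t. 0 * f t) \<in> C2pi" unfolding C2pi_def by simp
  then have "L f x = L (\<lambda>t. 0 * f t) x"
    using f0 by (intro admissible_op_cong[OF L f _ _ x]) auto
  then show ?thesis using admissible_op_scale[OF L f x, of 0] by simp
qed

lemma
  assumes L: "admissible_op N xs L" and f: "f \<in> C2pi" "sup_norm f \<le> 1"
  shows sup_norm_Id_minus_le_op_norm: "sup_norm (\<lambda>x. f x - L f x) \<le> op_norm_Id_minus L"
proof -
  obtain K where K: "\<And>f. f \<in> C2pi \<Longrightarrow> sup_norm (L f) \<le> K * sup_norm f"
    using admissible_op_bounded[OF L] by blast
  have "sup_norm (\<lambda>x. g x - L g x) \<le> 1 + \<bar>K\<bar>" if g: "g \<in> C2pi" "sup_norm g \<le> 1" for g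
  proof -
    have cg: "continuous_on Ipi g" "continuous_on Ipi (L g)"
      using g(1) admissible_op_C2pi[OF L] C2pi_continuous_on by blast+
    have "K * sup_norm g \<le> \<bar>K\<bar> * sup_norm g"
      using sup_norm_nonneg[OF cg(1)] by (intro mult_right_mono) auto
    also have "\<dots> \<le> \<bar>K\<bar>" using g(2) by (intro mult_left_le) auto
    finally have "K * sup_norm g \<le> \<bar>K\<bar>" .
    then have "sup_norm g + sup_norm (L g) \<le> 1 + \<bar>K\<bar>" using K[OF g(1)] g(2) by linarith
    moreover have "\<bar>g x - L g x\<bar> \<le> sup_norm g + sup_norm (L g)" if "x \<in> Ipi" for x
      using abs_le_sup_norm[OF cg(1) that] abs_le_sup_norm[OF cg(2) that] by linarith
    ultimately show ?thesis by (intro sup_norm_le) force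
  qed
  then have "bdd_above {sup_norm (\<lambda>x. g x - L g x) | g. g \<in> C2pi \<and> sup_norm g \<le> 1}"
    by (intro bdd_aboveI[of _ "1 + \<bar>K\<bar>"]) blast
  then show ?thesis
    unfolding op_norm_Id_minus_def using f by (intro cSup_upper) blast+
qed

lemma op_norm_Id_minus_nonneg:
  assumes L: "admissible_op N xs L"
  shows "0 \<le> op_norm_Id_minus L"
proof -
  have z: "(\<lambda>_. 0) \<in> C2pi" unfolding C2pi_def by simp
  have "0 \<le> sup_norm (\<lambda>x. 0 - L (\<lambda>_. 0) x)"
    using admissible_op_C2pi[OF L z] by (intro sup_norm_nonneg continuous_intros C2pi_continuous_on)
  also have "\<dots> \<le> op_norm_Id_minus L"
    using z by (intro sup_norm_Id_minus_le_op_norm[OF L]) (auto intro: sup_norm_le)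
  finally show ?thesis .
qed

lemma sup_norm_Id_minus_le:
  assumes L: "admissible_op N xs L" and r: "r \<in> C2pi"
  shows "sup_norm (\<lambda>x. r x - L r x) \<le> op_norm_Id_minus L * sup_norm r"
proof (cases "sup_norm r = 0")
  case True
  have "r x = 0" if "x \<in> Ipi" for x
    using abs_le_sup_norm[OF C2pi_continuous_on[OF r] that] True by simp
  then show ?thesis
    using True admissible_op_vanishing[OF L r] by (intro sup_norm_le) simp
next
  case False
  define s where "s = sup_norm r"
  have s: "s > 0" using False sup_norm_nonneg[OF C2pi_continuous_on[OF r]] unfolding s_def by simp
  define f where "f t = (1 / s) * r t" for t
  have fC: "f \<in> C2pi"
    using r s unfolding f_def[abs_def] C2pi_def by (auto intro!: continuous_intros)
  have "sup_norm f \<le> 1"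
    using abs_le_sup_norm[OF C2pi_continuous_on[OF r]] s
    unfolding f_def s_def by (intro sup_norm_le) (simp add: abs_mult)
  then have w: "sup_norm (\<lambda>x. f x - L f x) \<le> op_norm_Id_minus L"
    by (rule sup_norm_Id_minus_le_op_norm[OF L fC])
  show ?thesis
  proof (rule sup_norm_le)
    fix x assume x: "x \<in> Ipi"
    have "L f x = (1 / s) * L r x" unfolding f_def[abs_def] by (rule admissible_op_scale[OF L r x])
    then have "\<bar>r x - L r x\<bar> = s * \<bar>f x - L f x\<bar>"
      using s unfolding f_def by (simp add: field_simps abs_mult)
    also have "\<dots> \<le> s * op_norm_Id_minus L"
      using abs_le_sup_norm[OF _ x, of "\<lambda>x. f x - L f x"] w s C2pi_continuous_on[OF fC]
        C2pi_continuous_on[OF admissible_op_C2pi[OF L fC]]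
      by (intro mult_left_mono) (auto intro: continuous_intros order_trans)
    finally show "\<bar>r x - L r x\<bar> \<le> op_norm_Id_minus L * sup_norm r"
      unfolding s_def by (simp add: mult.commute)
  qed
qed

lemma
  assumes knots: "knot_partition N xs" and alpha: "alpha_ok N \<alpha>"
    and L: "admissible_op N xs L" and r: "r \<in> C2pi"
  shows continuous_fractal_op: "continuous_on Ipi (fractal_op N xs \<alpha> L r)"
    and fractal_op_minus_abs_le: "x \<in> Ipi \<Longrightarrow> \<bar>fractal_op N xs \<alpha> L r x - r x\<bar>
      \<le> alpha_norm N \<alpha> / (1 - alpha_norm N \<alpha>) * sup_norm (\<lambda>x. r x - L r x)"
proof -
  have "continuous_on Ipi r" "continuous_on Ipi (L r)" "r (-pi) = L r (-pi)" "r pi = L r pi"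
    using C2pi_continuous_on[OF r] C2pi_continuous_on[OF admissible_op_C2pi[OF L r]]
      admissible_op_endpoints[OF L r] knot_first[OF knots alpha] knot_last[OF knots alpha]
    by auto
  then show "continuous_on Ipi (fractal_op N xs \<alpha> L r)"
    and "x \<in> Ipi \<Longrightarrow> \<bar>fractal_op N xs \<alpha> L r x - r x\<bar>
      \<le> alpha_norm N \<alpha> / (1 - alpha_norm N \<alpha>) * sup_norm (\<lambda>x. r x - L r x)"
    unfolding fractal_op_def
    using continuous_fif[OF knots alpha] fif_minus_abs_le[OF knots alpha] by blast+
qed

lemma fractal_op_dist_le:
  assumes knots: "knot_partition N xs" and alpha: "alpha_ok N \<alpha>"
    and L: "admissible_op N xs L" and f: "f \<in> C2pi" and r: "r \<in> C2pi"
  shows "sup_norm (\<lambda>x. f x - fractal_op N xs \<alpha> L r x)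
    \<le> (1 + alpha_norm N \<alpha> * (op_norm_Id_minus L - 1)) / (1 - alpha_norm N \<alpha>)
        * sup_norm (\<lambda>x. f x - r x)
      + alpha_norm N \<alpha> / (1 - alpha_norm N \<alpha>) * op_norm_Id_minus L * sup_norm f"
proof -
  define a where "a = alpha_norm N \<alpha>"
  define w where "w = op_norm_Id_minus L"
  define s where "s = sup_norm (\<lambda>x. f x - r x)"
  have a: "0 \<le> a" "a < 1"
    unfolding a_def using alpha_norm_nonneg[OF knots alpha] alpha_norm_less_one[OF knots alpha] by auto
  have cfr: "continuous_on Ipi (\<lambda>x. f x - r x)"
    using C2pi_continuous_on[OF f] C2pi_continuous_on[OF r] by (intro continuous_intros)
  have "sup_norm r \<le> sup_norm f + s"
  proof (rule sup_norm_le)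
    fix x assume x: "x \<in> Ipi"
    show "\<bar>r x\<bar> \<le> sup_norm f + s"
      using abs_le_sup_norm[OF C2pi_continuous_on[OF f] x] abs_le_sup_norm[OF cfr x]
      unfolding s_def by linarith
  qed
  then have "sup_norm (\<lambda>x. r x - L r x) \<le> w * (sup_norm f + s)"
    using sup_norm_Id_minus_le[OF L r] op_norm_Id_minus_nonneg[OF L] unfolding w_def
    by (meson mult_left_mono order_trans)
  then have r_close: "\<bar>fractal_op N xs \<alpha> L r x - r x\<bar> \<le> a / (1 - a) * (w * (sup_norm f + s))"
    if "x \<in> Ipi" for x
    using fractal_op_minus_abs_le[OF knots alpha L r that] a unfolding a_def
    by (meson divide_nonneg_pos diff_gt_0_iff_gt mult_left_mono order_trans)
  have "sup_norm (\<lambda>x. f x - fractal_op N xs \<alpha> L r x) \<le> s + a / (1 - a) * (w * (sup_norm f + s))"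
  proof (rule sup_norm_le)
    fix x assume x: "x \<in> Ipi"
    show "\<bar>f x - fractal_op N xs \<alpha> L r x\<bar> \<le> s + a / (1 - a) * (w * (sup_norm f + s))"
      using r_close[OF x] abs_le_sup_norm[OF cfr x] unfolding s_def by linarith
  qed
  also have "\<dots> = (1 + a * (w - 1)) / (1 - a) * s + a / (1 - a) * w * sup_norm f"
  proof -
    have "(1 + a * (w - 1)) / (1 - a) = 1 + a / (1 - a) * w"
      using a by (simp add: divide_simps) (simp add: algebra_simps)
    then show ?thesis by (simp add: algebra_simps)
  qed
  finally show ?thesis unfolding a_def w_def s_def .
qed

lemma E_best_alpha_le:
  assumes knots: "knot_partition N xs" and alpha: "alpha_ok N \<alpha>"
    and L: "admissible_op N xs L" and f: "f \<in> C2pi" and r: "r \<in> rat_trig m n"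
  shows "E_best_alpha N xs \<alpha> L m n f \<le> sup_norm (\<lambda>x. f x - fractal_op N xs \<alpha> L r x)"
  unfolding E_best_alpha_def frac_rat_trig_def
proof (rule cInf_lower)
  show "sup_norm (\<lambda>x. f x - fractal_op N xs \<alpha> L r x)
    \<in> {sup_norm (\<lambda>x. f x - g x) | g. g \<in> fractal_op N xs \<alpha> L ` rat_trig m n}"
    using r by blast
  have "0 \<le> sup_norm (\<lambda>x. f x - fractal_op N xs \<alpha> L r' x)" if "r' \<in> rat_trig m n" for r'
    using that rat_trig_subset_C2pi C2pi_continuous_on[OF f]
      continuous_fractal_op[OF knots alpha L]
    by (intro sup_norm_nonneg continuous_intros) auto
  then show "bdd_below {sup_norm (\<lambda>x. f x - g x) | g. g \<in> fractal_op N xs \<alpha> L ` rat_trig m n}"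
    by (intro bdd_belowI[of _ 0]) blast
qed

theorem mainTheorem6:
  fixes N :: nat and xs :: "nat \<Rightarrow> real" and \<alpha> :: "nat \<Rightarrow> real"
    and L :: "(real \<Rightarrow> real) \<Rightarrow> (real \<Rightarrow> real)"
    and f :: "real \<Rightarrow> real" and m n :: nat
  assumes "knot_partition N xs"
    and "alpha_ok N \<alpha>"
    and "admissible_op N xs L"
    and "f \<in> C2pi"
  shows "E_best_alpha N xs \<alpha> L m n f
    \<le> (1 + alpha_norm N \<alpha> * (op_norm_Id_minus L - 1)) / (1 - alpha_norm N \<alpha>) * E_best m n f
      + alpha_norm N \<alpha> / (1 - alpha_norm N \<alpha>) * op_norm_Id_minus L * sup_norm f"
  unfolding E_best_def
proof (rule le_Inf_affine)
  show "{sup_norm (\<lambda>x. f x - r x) | r. r \<in> rat_trig m n} \<noteq> {}"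
    using rat_trig_nonempty by blast
  have a: "0 \<le> alpha_norm N \<alpha>" "alpha_norm N \<alpha> < 1"
    using alpha_norm_nonneg[OF assms(1,2)] alpha_norm_less_one[OF assms(1,2)] by auto
  then have "0 \<le> alpha_norm N \<alpha> * op_norm_Id_minus L"
    using op_norm_Id_minus_nonneg[OF assms(3)] by simp
  then show "0 < (1 + alpha_norm N \<alpha> * (op_norm_Id_minus L - 1)) / (1 - alpha_norm N \<alpha>)"
    using a by (simp add: algebra_simps)
  show "E_best_alpha N xs \<alpha> L m n f
    \<le> (1 + alpha_norm N \<alpha> * (op_norm_Id_minus L - 1)) / (1 - alpha_norm N \<alpha>) * s
      + alpha_norm N \<alpha> / (1 - alpha_norm N \<alpha>) * op_norm_Id_minus L * sup_norm f"
    if s_in: "s \<in> {sup_norm (\<lambda>x. f x - r x) | r. r \<in> rat_trig m n}" for s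
  proof -
    obtain r where r: "r \<in> rat_trig m n" and s: "s = sup_norm (\<lambda>x. f x - r x)"
      using s_in by blast
    show ?thesis
      using E_best_alpha_le[OF assms r] fractal_op_dist_le[OF assms] r rat_trig_subset_C2pi
      unfolding s by fastforce
  qed
qed

end
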